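(* Any surface $S$ of the class $\Gamma$ has the following properties: $1)$ the parametric lines are principal lines; $2)$ the family $\mathcal F_1$ of $u$-lines ($v=\mathrm{const}$) consists of geodesics.
   Context: Let $c_2: x=x(v),\ v\in J_2$, be a smooth regular curve in Euclidean space $\mathbb R^3$ parameterized by arc length, with unit tangent $t(v)$, principal normal $n(v)$, binormal $b(v)$, curvature $\kappa(v)>0$ and torsion $\tau(v)$. Put $\theta(v)=-\int_0^v\tau\,dv$ and $e_1=\cos\theta\, n+\sin\theta\, b$, $e_2=-\sin\theta\, n+\cos\theta\, b$ (an orthonormal pair of torse-forming normals along $c_2$, i.e. $e_i'$ is proportional to $t$). Let $\lambda(u),\mu(u)$, $u\in J_1$, be functions with $\dot\lambda^2+\dot\mu^2=1$, $\lambda(0)=\mu(0)=0$, $\dot\lambda(0)=1$, $\dot\mu(0)=0$, so that $u\mapsto(\lambda(u),\mu(u))$ is a plane curve $c_1$ parameterized by arc length with plane curvature $\kappa_1(u)\neq 0$. Consider the surface $S: Z(u,v)=x(v)+\lambda(u)e_1(v)+\mu(u)e_2(v)$, $u\in J_1$, $v\in J_2$, at the points where $\lambda\cos\theta-\mu\sin\theta\neq 1/\kappa$, oriented by the unit normal $l=-\dot\mu\, e_1+\dot\lambda\, e_2$. The class $\Gamma$ is the class of all such surfaces. A family of parametric lines is called principal if its lines are lines of curvature; $\mathcal F_1$ denotes the family of $u$-parameter lines and $\mathcal F_2$ the family of $v$-parameter lines. *)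

theory Defs
  imports "HOL-Analysis.Analysis"
begin

text \<open>Oriented integral from a to b (so that theta v = - int_0^v tau also for v < 0).\<close>
definition oint :: "real \<Rightarrow> real \<Rightarrow> (real \<Rightarrow> real) \<Rightarrow> real" where
  "oint a b f = (if a \<le> b then integral {a..b} f else - integral {b..a} f)"

text \<open>The u-parameter line through (u,v) of the surface Z with unit normal field N is a
  line of curvature at (u,v): its tangent Z_u is a principal direction, i.e. (Rodrigues /
  Weingarten) the derivative of the normal along the line is a multiple of Z_u.\<close>
definition curvature_line_u ::
  "(real \<Rightarrow> real \<Rightarrow> real^3) \<Rightarrow> (real \<Rightarrow> real \<Rightarrow> real^3) \<Rightarrow> real \<Rightarrow> real \<Rightarrow> bool" where
  "curvature_line_u Z N u v \<longleftrightarrow>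
     (\<exists>Zu Nu k. ((\<lambda>s. Z s v) has_vector_derivative Zu) (at u)
              \<and> ((\<lambda>s. N s v) has_vector_derivative Nu) (at u)
              \<and> Nu = k *\<^sub>R Zu)"

definition curvature_line_v ::
  "(real \<Rightarrow> real \<Rightarrow> real^3) \<Rightarrow> (real \<Rightarrow> real \<Rightarrow> real^3) \<Rightarrow> real \<Rightarrow> real \<Rightarrow> bool" where
  "curvature_line_v Z N u v \<longleftrightarrow>
     (\<exists>Zv Nv k. ((\<lambda>s. Z u s) has_vector_derivative Zv) (at v)
              \<and> ((\<lambda>s. N u s) has_vector_derivative Nv) (at v)
              \<and> Nv = k *\<^sub>R Zv)"

text \<open>The u-parameter line through (u,v) is geodesic at (u,v): it is twice differentiable
  there and its geodesic curvature vanishes, i.e. det(N, Z_u, Z_uu) = (N x Z_u) . Z_uu = 0.\<close>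
definition geodesic_line_u ::
  "(real \<Rightarrow> real \<Rightarrow> real^3) \<Rightarrow> (real \<Rightarrow> real \<Rightarrow> real^3) \<Rightarrow> real \<Rightarrow> real \<Rightarrow> bool" where
  "geodesic_line_u Z N u v \<longleftrightarrow>
     (\<exists>Zu Zuu. (\<forall>\<^sub>F s in nhds u. ((\<lambda>r. Z r v) has_vector_derivative Zu s) (at s))
             \<and> (Zu has_vector_derivative Zuu) (at u)
             \<and> (cross3 (N u v) (Zu u)) \<bullet> Zuu = 0)"

end

theory Submission
  imports Defs
begin

text \<open>Along the directrix the normals e1, e2 are obtained from the Frenet normals n, b by
  the rotation through the angle theta with theta' = -tau, which cancels the torsion terms in
  the Frenet equations: e1' and e2' are multiples of t. Hence Z_v and l_v are both multiples of
  t, so the v-lines are lines of curvature wherever Z_v does not vanish. In the u-direction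
  everything happens in the fixed plane spanned by e1(v), e2(v): l_u is the derivative of the
  normal of the unit-speed plane curve (lam, mu), which is proportional to its tangent Z_u, and
  the normal l together with Z_u and Z_uu are coplanar, so the u-lines are geodesics.\<close>

lemma has_real_derivative_locally_constant:
  assumes "(f has_real_derivative D) (at v)" "open S" "v \<in> S" "\<And>w. w \<in> S \<Longrightarrow> f w = c"
  shows "D = 0"
proof -
  have "(f has_real_derivative 0) (at v)"
    by (rule has_field_derivative_transform_within_open[OF DERIV_const assms(2,3)]) (simp add: assms(4))
  with assms(1) show ?thesis
    using DERIV_unique by blast
qed

lemma unit_vector_orthogonal_derivative:
  fixes f :: "real \<Rightarrow> 'a::real_inner"
  assumes "open J" "v \<in> J" "\<forall>w\<in>J. norm (f w) = 1" "(f has_vector_derivative f') (at v)"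
  shows "f v \<bullet> f' = 0"
proof -
  have "((\<lambda>s. f s \<bullet> f s) has_real_derivative f v \<bullet> f' + f' \<bullet> f v) (at v)"
    unfolding has_real_derivative_iff_has_vector_derivative
    by (rule bounded_bilinear.has_vector_derivative[OF bounded_bilinear_inner assms(4,4)])
  then have "f v \<bullet> f' + f' \<bullet> f v = 0"
    by (rule has_real_derivative_locally_constant[OF _ assms(1,2)])
       (simp add: assms(3) dot_square_norm)
  then show ?thesis
    by (simp add: inner_commute)
qed

lemma oint_eq_integral_diff:
  fixes f :: "real \<Rightarrow> real"
  assumes "f integrable_on {a..b}" "a \<le> c" "c \<le> b" "a \<le> w" "w \<le> b"
  shows "oint c w f = integral {a..w} f - integral {a..c} f"
proof (cases "c \<le> w")
  case True
  have "f integrable_on {a..w}"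
    using assms by (auto intro: integrable_subinterval_real)
  then have "integral {a..c} f + integral {c..w} f = integral {a..w} f"
    using True assms by (intro Henstock_Kurzweil_Integration.integral_combine) auto
  with True show ?thesis
    by (simp add: oint_def)
next
  case False
  have "f integrable_on {a..c}"
    using assms by (auto intro: integrable_subinterval_real)
  then have "integral {a..w} f + integral {w..c} f = integral {a..c} f"
    using False assms by (intro Henstock_Kurzweil_Integration.integral_combine) auto
  with False show ?thesis
    by (simp add: oint_def)
qed

lemma is_interval_open_enclosing_interval:
  fixes J :: "real set"
  assumes J: "open J" "is_interval J" and "p \<in> J" "q \<in> J"
  obtains a b where "{a..b} \<subseteq> J" "p \<in> {a<..<b}" "q \<in> {a<..<b}"
proof -
  have "min p q \<in> J" "max p q \<in> J"
    using assms(3,4) by (simp_all add: min_def max_def)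
  then obtain ea eb where ea: "ea > 0" "ball (min p q) ea \<subseteq> J" and eb: "eb > 0" "ball (max p q) eb \<subseteq> J"
    by (meson J(1) openE)
  have a: "min p q - ea/2 \<in> J"
    by (rule subsetD[OF ea(2)]) (simp add: dist_real_def abs_of_pos ea(1))
  have b: "max p q + eb/2 \<in> J"
    by (rule subsetD[OF eb(2)]) (simp add: dist_real_def abs_of_pos eb(1))
  have "{min p q - ea/2..max p q + eb/2} \<subseteq> J"
    using mem_is_interval_1_I[OF J(2) a b] by auto
  moreover have "p \<in> {min p q - ea/2<..<max p q + eb/2}" "q \<in> {min p q - ea/2<..<max p q + eb/2}"
    using ea(1) eb(1) by auto
  ultimately show ?thesis
    using that by blast
qed

lemma oint_has_real_derivative:
  fixes f :: "real \<Rightarrow> real"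
  assumes J: "open J" "is_interval J" and f: "continuous_on J f" and c: "c \<in> J" and v: "v \<in> J"
  shows "((\<lambda>w. oint c w f) has_real_derivative f v) (at v)"
proof -
  obtain a b where sub: "{a..b} \<subseteq> J" and cv: "c \<in> {a<..<b}" "v \<in> {a<..<b}"
    using is_interval_open_enclosing_interval[OF J c v] .
  have cont: "continuous_on {a..b} f"
    using f sub by (rule continuous_on_subset)
  have "((\<lambda>w. integral {a..w} f) has_real_derivative f v) (at v within {a..b})"
    using cont cv by (intro integral_has_real_derivative) auto
  moreover have "at v within {a..b} = at v"
    using cv by (intro at_within_interior) simp
  ultimately have "((\<lambda>w. integral {a..w} f) has_real_derivative f v) (at v)"
    by simp
  then have "((\<lambda>w. integral {a..w} f - integral {a..c} f) has_real_derivative f v) (at v)"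
    using DERIV_diff[OF _ DERIV_const[of "integral {a..c} f"]] by simp
  moreover have "integral {a..w} f - integral {a..c} f = oint c w f" if "w \<in> {a<..<b}" for w
    using that cv by (intro oint_eq_integral_diff[OF integrable_continuous_real[OF cont], symmetric]) auto
  ultimately show ?thesis
    by (rule has_field_derivative_transform_within_open[OF _ open_greaterThanLessThan cv(2)])
qed

lemma cross3_cross3_left:
  fixes a b c :: "real^3"
  shows "cross3 (cross3 a b) c = (a \<bullet> c) *\<^sub>R b - (b \<bullet> c) *\<^sub>R a"
  unfolding vec_eq_iff forall_3 cross3_def inner_vec_def sum_3 vector_def
  by (simp add: algebra_simps)

lemma cross3_inner_span2_eq_0:
  fixes p q :: "real^3"
  shows "cross3 (a *\<^sub>R p + b *\<^sub>R q) (c *\<^sub>R p + d *\<^sub>R q) \<bullet> (e *\<^sub>R p + f *\<^sub>R q) = 0"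
  by (simp add: cross_add_left cross_add_right cross_mult_left cross_mult_right
      inner_add_left inner_add_right dot_cross_self)

lemma bounded_bilinear_cross3: "bounded_bilinear (cross3 :: real^3 \<Rightarrow> real^3 \<Rightarrow> real^3)"
  using bilinear_cross bilinear_conv_bounded_bilinear by blast

lemma frenet_normal_derivative:
  fixes t n b :: "real \<Rightarrow> real^3"
  assumes J: "open J" "v \<in> J"
    and unit: "\<forall>w\<in>J. norm (t w) = 1" "\<forall>w\<in>J. norm (n w) = 1"
    and orth: "\<forall>w\<in>J. t w \<bullet> n w = 0"
    and binormal: "\<forall>w\<in>J. b w = cross3 (t w) (n w)"
    and dt: "(t has_vector_derivative \<kappa> *\<^sub>R n v) (at v)"
    and db: "(b has_vector_derivative - \<tau> *\<^sub>R n v) (at v)"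
  shows "(n has_vector_derivative \<tau> *\<^sub>R b v - \<kappa> *\<^sub>R t v) (at v)"
proof -
  have n_eq: "n w = cross3 (b w) (t w)" if "w \<in> J" for w
    using that unit orth binormal
    by (simp add: cross3_cross3_left dot_square_norm inner_commute)
  have "cross3 (b v) (n v) = - t v"
    using J unit orth binormal by (simp add: cross3_cross3_left dot_square_norm inner_commute)
  moreover have "cross3 (n v) (t v) = - b v"
    using J binormal by (subst cross_skew) simp
  moreover have "((\<lambda>s. cross3 (b s) (t s)) has_vector_derivative
      cross3 (b v) (\<kappa> *\<^sub>R n v) + cross3 (- \<tau> *\<^sub>R n v) (t v)) (at v)"
    by (rule bounded_bilinear.has_vector_derivative[OF bounded_bilinear_cross3 db dt])
  ultimately have "((\<lambda>s. cross3 (b s) (t s)) has_vector_derivative \<tau> *\<^sub>R b v - \<kappa> *\<^sub>R t v) (at v)"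
    by (simp add: cross_mult_left cross_mult_right)
  then show ?thesis
    by (rule has_vector_derivative_transform_within_open[OF _ J]) (simp add: n_eq)
qed

text \<open>Every normal field at a constant angle alpha to the rotated frame is torse-forming;
  e1 and e2 are the cases alpha = 0 and alpha = pi/2.\<close>

lemma rotated_normal_derivative:
  fixes n b :: "real \<Rightarrow> real^3"
  assumes dn: "(n has_vector_derivative \<tau> *\<^sub>R b v - \<kappa> *\<^sub>R T) (at v)"
    and db: "(b has_vector_derivative - \<tau> *\<^sub>R n v) (at v)"
    and d\<theta>: "(\<theta> has_real_derivative - \<tau>) (at v)"
  shows "((\<lambda>w. cos (\<theta> w + \<alpha>) *\<^sub>R n w + sin (\<theta> w + \<alpha>) *\<^sub>R b w)
           has_vector_derivative (- \<kappa> * cos (\<theta> v + \<alpha>)) *\<^sub>R T) (at v)"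
proof -
  have d\<theta>\<alpha>: "((\<lambda>w. \<theta> w + \<alpha>) has_real_derivative - \<tau>) (at v)"
    using DERIV_add[OF d\<theta> DERIV_const] by simp
  have "((\<lambda>w. cos (\<theta> w + \<alpha>) *\<^sub>R n w + sin (\<theta> w + \<alpha>) *\<^sub>R b w) has_vector_derivative
      cos (\<theta> v + \<alpha>) *\<^sub>R (\<tau> *\<^sub>R b v - \<kappa> *\<^sub>R T) + (- sin (\<theta> v + \<alpha>) * - \<tau>) *\<^sub>R n v
      + (sin (\<theta> v + \<alpha>) *\<^sub>R (- \<tau> *\<^sub>R n v) + (cos (\<theta> v + \<alpha>) * - \<tau>) *\<^sub>R b v)) (at v)"
    by (intro has_vector_derivative_add has_vector_derivative_scaleR dn db
        DERIV_fun_cos DERIV_fun_sin d\<theta>\<alpha>)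
  then show ?thesis
    by (simp add: algebra_simps)
qed

lemma unit_speed_plane_curve_normal_derivative:
  assumes J: "open J" "u \<in> J"
    and unit_speed: "\<forall>s\<in>J. (lam' s)\<^sup>2 + (mu' s)\<^sup>2 = 1"
    and d: "(lam' has_real_derivative a) (at u)" "(mu' has_real_derivative b) (at u)"
  defines "k \<equiv> lam' u * b - a * mu' u"
  shows "a = - k * mu' u" "b = k * lam' u"
proof -
  have "((\<lambda>s. (lam' s)\<^sup>2 + (mu' s)\<^sup>2) has_real_derivative 2 * lam' u * a + 2 * mu' u * b) (at u)"
    using d by (auto intro!: derivative_eq_intros)
  then have "2 * lam' u * a + 2 * mu' u * b = 0"
    by (rule has_real_derivative_locally_constant[OF _ J]) (use unit_speed in auto)
  then have orth: "lam' u * a + mu' u * b = 0"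
    by simp
  have one: "(lam' u)\<^sup>2 + (mu' u)\<^sup>2 = 1"
    using J unit_speed by auto
  have "a * ((lam' u)\<^sup>2 + (mu' u)\<^sup>2) + k * mu' u = lam' u * (lam' u * a + mu' u * b)"
       "b * ((lam' u)\<^sup>2 + (mu' u)\<^sup>2) - k * lam' u = mu' u * (lam' u * a + mu' u * b)"
    unfolding k_def power2_eq_square by (simp_all add: algebra_simps)
  then show "a = - k * mu' u" "b = k * lam' u"
    using one orth by simp_all
qed

lemma curvature_line_vI:
  assumes "((\<lambda>s. Z u s) has_vector_derivative a *\<^sub>R w) (at v)"
    and "((\<lambda>s. N u s) has_vector_derivative c *\<^sub>R w) (at v)" and "a \<noteq> 0"
  shows "curvature_line_v Z N u v"
  unfolding curvature_line_v_def
  using assms by (intro exI[of _ "a *\<^sub>R w"] exI[of _ "c *\<^sub>R w"] exI[of _ "c / a"]) auto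

lemma curvature_line_v_torse_forming:
  fixes x e1 e2 :: "real \<Rightarrow> real^3"
  assumes dx: "(x has_vector_derivative T) (at v)"
    and de1: "(e1 has_vector_derivative p *\<^sub>R T) (at v)"
    and de2: "(e2 has_vector_derivative q *\<^sub>R T) (at v)"
    and regular: "1 + lam u * p + mu u * q \<noteq> 0"
  shows "curvature_line_v (\<lambda>u v. x v + lam u *\<^sub>R e1 v + mu u *\<^sub>R e2 v)
           (\<lambda>u v. - mu' u *\<^sub>R e1 v + lam' u *\<^sub>R e2 v) u v"
proof (rule curvature_line_vI[OF _ _ regular])
  note scale = bounded_linear.has_vector_derivative[OF bounded_linear_scaleR_right]
  show "((\<lambda>s. x s + lam u *\<^sub>R e1 s + mu u *\<^sub>R e2 s) has_vector_derivative
      (1 + lam u * p + mu u * q) *\<^sub>R T) (at v)"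
    by (rule has_vector_derivative_eq_rhs[OF
          has_vector_derivative_add[OF has_vector_derivative_add[OF dx scale[OF de1]] scale[OF de2]]])
       (simp add: algebra_simps)
  show "((\<lambda>s. - mu' u *\<^sub>R e1 s + lam' u *\<^sub>R e2 s) has_vector_derivative
      (- mu' u * p + lam' u * q) *\<^sub>R T) (at v)"
    by (rule has_vector_derivative_eq_rhs[OF has_vector_derivative_add[OF scale[OF de1] scale[OF de2]]])
       (simp add: algebra_simps)
qed

lemma plane_curve_in_plane_derivative:
  fixes z p q :: "'a::real_normed_vector"
  assumes "(lam has_real_derivative a) (at u)" "(mu has_real_derivative b) (at u)"
  shows "((\<lambda>s. z + lam s *\<^sub>R p + mu s *\<^sub>R q) has_vector_derivative a *\<^sub>R p + b *\<^sub>R q) (at u)"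
  using has_vector_derivative_add[OF has_vector_derivative_add[OF has_vector_derivative_const
        has_vector_derivative_scaleR[OF assms(1) has_vector_derivative_const]]
        has_vector_derivative_scaleR[OF assms(2) has_vector_derivative_const]]
  by simp

lemma curvature_line_u_plane_curve:
  fixes x e1 e2 :: "real \<Rightarrow> real^3"
  assumes J: "open J" "u \<in> J"
    and unit_speed: "\<forall>s\<in>J. (lam' s)\<^sup>2 + (mu' s)\<^sup>2 = 1"
    and d: "(lam has_real_derivative lam' u) (at u)" "(mu has_real_derivative mu' u) (at u)"
    and dd: "(lam' has_real_derivative a) (at u)" "(mu' has_real_derivative b) (at u)"
  shows "curvature_line_u (\<lambda>u v. x v + lam u *\<^sub>R e1 v + mu u *\<^sub>R e2 v)
           (\<lambda>u v. - mu' u *\<^sub>R e1 v + lam' u *\<^sub>R e2 v) u v"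
proof -
  define k where "k = lam' u * b - a * mu' u"
  have dZ: "((\<lambda>s. x v + lam s *\<^sub>R e1 v + mu s *\<^sub>R e2 v) has_vector_derivative
      lam' u *\<^sub>R e1 v + mu' u *\<^sub>R e2 v) (at u)"
    by (rule plane_curve_in_plane_derivative[OF d])
  have dN: "((\<lambda>s. - mu' s *\<^sub>R e1 v + lam' s *\<^sub>R e2 v) has_vector_derivative
      (- b) *\<^sub>R e1 v + a *\<^sub>R e2 v) (at u)"
    using plane_curve_in_plane_derivative[OF DERIV_minus[OF dd(2)] dd(1), of 0] by simp
  have "(- b) *\<^sub>R e1 v + a *\<^sub>R e2 v = (- k) *\<^sub>R (lam' u *\<^sub>R e1 v + mu' u *\<^sub>R e2 v)"
    using unit_speed_plane_curve_normal_derivative[OF J unit_speed dd, folded k_def]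
    by (simp only:) (simp add: algebra_simps)
  with dZ dN show ?thesis
    unfolding curvature_line_u_def by blast
qed

lemma geodesic_line_u_plane_curve:
  fixes x e1 e2 :: "real \<Rightarrow> real^3"
  assumes J: "open J" "u \<in> J"
    and d: "\<forall>s\<in>J. (lam has_real_derivative lam' s) (at s)" "\<forall>s\<in>J. (mu has_real_derivative mu' s) (at s)"
    and dd: "(lam' has_real_derivative a) (at u)" "(mu' has_real_derivative b) (at u)"
  shows "geodesic_line_u (\<lambda>u v. x v + lam u *\<^sub>R e1 v + mu u *\<^sub>R e2 v)
           (\<lambda>u v. - mu' u *\<^sub>R e1 v + lam' u *\<^sub>R e2 v) u v"
proof -
  let ?Zu = "\<lambda>s. lam' s *\<^sub>R e1 v + mu' s *\<^sub>R e2 v"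
  have "\<forall>s\<in>J. ((\<lambda>r. x v + lam r *\<^sub>R e1 v + mu r *\<^sub>R e2 v) has_vector_derivative ?Zu s) (at s)"
    using d by (simp add: plane_curve_in_plane_derivative)
  then have "\<forall>\<^sub>F s in nhds u. ((\<lambda>r. x v + lam r *\<^sub>R e1 v + mu r *\<^sub>R e2 v) has_vector_derivative ?Zu s) (at s)"
    using J eventually_nhds by blast
  moreover have "(?Zu has_vector_derivative a *\<^sub>R e1 v + b *\<^sub>R e2 v) (at u)"
    using plane_curve_in_plane_derivative[OF dd, of 0] by simp
  moreover have "cross3 (- mu' u *\<^sub>R e1 v + lam' u *\<^sub>R e2 v) (?Zu u) \<bullet> (a *\<^sub>R e1 v + b *\<^sub>R e2 v) = 0"
    by (simp only: cross3_inner_span2_eq_0)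
  ultimately show ?thesis
    unfolding geodesic_line_u_def by (intro exI[of _ ?Zu] exI[of _ "a *\<^sub>R e1 v + b *\<^sub>R e2 v"]) simp
qed

theorem lemma2p1:
  fixes x t n b :: "real \<Rightarrow> real^3"
    and \<kappa> \<tau> \<theta> :: "real \<Rightarrow> real"
    and e1 e2 :: "real \<Rightarrow> real^3"
    and lam mu lam' mu' lam'' mu'' :: "real \<Rightarrow> real"
    and J1 J2 :: "real set"
    and Z l :: "real \<Rightarrow> real \<Rightarrow> real^3"
  assumes J2: "open J2" "is_interval J2" "0 \<in> J2"
    and J1: "open J1" "is_interval J1" "0 \<in> J1"
    and tangent: "\<forall>v\<in>J2. (x has_vector_derivative t v) (at v)"
    and arclength: "\<forall>v\<in>J2. norm (t v) = 1"
    and frenet1: "\<forall>v\<in>J2. (t has_vector_derivative (\<kappa> v *\<^sub>R n v)) (at v)"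
    and curv_pos: "\<forall>v\<in>J2. \<kappa> v > 0"
    and normal_unit: "\<forall>v\<in>J2. norm (n v) = 1"
    and binormal: "\<forall>v\<in>J2. b v = cross3 (t v) (n v)"
    and torsion: "\<forall>v\<in>J2. (b has_vector_derivative (- \<tau> v *\<^sub>R n v)) (at v)"
    and tau_cont: "continuous_on J2 \<tau>"
    and lam_d: "\<forall>u\<in>J1. (lam has_real_derivative lam' u) (at u)"
    and mu_d: "\<forall>u\<in>J1. (mu has_real_derivative mu' u) (at u)"
    and lam_dd: "\<forall>u\<in>J1. (lam' has_real_derivative lam'' u) (at u)"
    and mu_dd: "\<forall>u\<in>J1. (mu' has_real_derivative mu'' u) (at u)"
    and c1_arclength: "\<forall>u\<in>J1. (lam' u)\<^sup>2 + (mu' u)\<^sup>2 = 1"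
    and init: "lam 0 = 0" "mu 0 = 0" "lam' 0 = 1" "mu' 0 = 0"
    and c1_curv: "\<forall>u\<in>J1. lam' u * mu'' u - lam'' u * mu' u \<noteq> 0"
    and theta_def: "\<theta> = (\<lambda>v. - oint 0 v \<tau>)"
    and e1_def: "e1 = (\<lambda>v. cos (\<theta> v) *\<^sub>R n v + sin (\<theta> v) *\<^sub>R b v)"
    and e2_def: "e2 = (\<lambda>v. - sin (\<theta> v) *\<^sub>R n v + cos (\<theta> v) *\<^sub>R b v)"
    and Z_def: "Z = (\<lambda>u v. x v + lam u *\<^sub>R e1 v + mu u *\<^sub>R e2 v)"
    and l_def: "l = (\<lambda>u v. - mu' u *\<^sub>R e1 v + lam' u *\<^sub>R e2 v)"
  shows "\<forall>u\<in>J1. \<forall>v\<in>J2.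
           lam u * cos (\<theta> v) - mu u * sin (\<theta> v) \<noteq> 1 / \<kappa> v \<longrightarrow>
             curvature_line_u Z l u v \<and> curvature_line_v Z l u v \<and> geodesic_line_u Z l u v"
proof (intro ballI impI)
  fix u v assume u: "u \<in> J1" and v: "v \<in> J2"
    and regular: "lam u * cos (\<theta> v) - mu u * sin (\<theta> v) \<noteq> 1 / \<kappa> v"
  have tn: "\<forall>w\<in>J2. t w \<bullet> n w = 0"
  proof
    fix w assume w: "w \<in> J2"
    have "t w \<bullet> (\<kappa> w *\<^sub>R n w) = 0"
      by (rule unit_vector_orthogonal_derivative[OF J2(1) w arclength frenet1[rule_format, OF w]])
    then have "\<kappa> w * (t w \<bullet> n w) = 0"
      by simp
    moreover have "\<kappa> w > 0"
      using curv_pos w by blast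
    ultimately show "t w \<bullet> n w = 0"
      by simp
  qed
  have dn: "(n has_vector_derivative \<tau> v *\<^sub>R b v - \<kappa> v *\<^sub>R t v) (at v)"
    by (rule frenet_normal_derivative[OF J2(1) v arclength normal_unit tn binormal
          frenet1[rule_format, OF v] torsion[rule_format, OF v]])
  have d\<theta>: "(\<theta> has_real_derivative - \<tau> v) (at v)"
    unfolding theta_def by (rule DERIV_minus[OF oint_has_real_derivative[OF J2(1,2) tau_cont J2(3) v]])
  note rotated = rotated_normal_derivative[OF dn torsion[rule_format, OF v] d\<theta>]
  have de1: "(e1 has_vector_derivative (- \<kappa> v * cos (\<theta> v)) *\<^sub>R t v) (at v)"
    using rotated[of 0] by (simp add: e1_def)
  have de2: "(e2 has_vector_derivative (\<kappa> v * sin (\<theta> v)) *\<^sub>R t v) (at v)"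
    using rotated[of "pi/2"] by (simp add: e2_def cos_add sin_add)
  have "1 + lam u * (- \<kappa> v * cos (\<theta> v)) + mu u * (\<kappa> v * sin (\<theta> v)) \<noteq> 0"
  proof
    assume "1 + lam u * (- \<kappa> v * cos (\<theta> v)) + mu u * (\<kappa> v * sin (\<theta> v)) = 0"
    then have "(lam u * cos (\<theta> v) - mu u * sin (\<theta> v)) * \<kappa> v = 1"
      by (simp add: algebra_simps)
    moreover have "\<kappa> v \<noteq> 0"
      using curv_pos v by force
    ultimately show False
      using regular by (simp add: eq_divide_eq)
  qed
  then have "curvature_line_v Z l u v"
    unfolding Z_def l_def
    by (rule curvature_line_v_torse_forming[OF tangent[rule_format, OF v] de1 de2])
  moreover have "curvature_line_u Z l u v"
    unfolding Z_def l_def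
    by (rule curvature_line_u_plane_curve[OF J1(1) u c1_arclength
          lam_d[rule_format, OF u] mu_d[rule_format, OF u] lam_dd[rule_format, OF u] mu_dd[rule_format, OF u]])
  moreover have "geodesic_line_u Z l u v"
    unfolding Z_def l_def
    by (rule geodesic_line_u_plane_curve[OF J1(1) u lam_d mu_d
          lam_dd[rule_format, OF u] mu_dd[rule_format, OF u]])
  ultimately show "curvature_line_u Z l u v \<and> curvature_line_v Z l u v \<and> geodesic_line_u Z l u v"
    by blast
qed

end
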